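(* Let $L\ge2$ be an integer and $r\in[0,\frac{L}{L+1})$. There exists an integer $n(r,L)$ such that for every prime power $q$ and every $n\ge n(r,L)$ with $rn\in\mathbb{N}$, every linear $[n,k]_q$ code that is $(r,L)$ list-decodable satisfies $k\le n-\lceil\frac{L+1}{L}rn\rceil$.
   Context: A linear $[n,k]_q$ code is a $k$-dimensional subspace of $\mathbb{F}_q^n$. $B_t(v)$ is the Hamming ball of radius $t$ around $v$. A code $C$ is $(r,L)$ list-decodable if $|B_{rn}(v)\cap C|\le L$ for every $v\in\mathbb{F}_q^n$. *)

theory Defs
  imports "HOL-Algebra.Algebra"
begin

text \<open>Finite fields are represented as HOL-Algebra field records with carrier
  of type nat set (every finite field is isomorphic to such a one). Vectors of
  length n over F are functions nat => nat with entries in the carrier on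
  positions < n and zero elsewhere.\<close>

definition vecs :: "(nat, 'b) ring_scheme \<Rightarrow> nat \<Rightarrow> (nat \<Rightarrow> nat) set" where
  "vecs F n = {v. (\<forall>i<n. v i \<in> carrier F) \<and> (\<forall>i\<ge>n. v i = \<zero>\<^bsub>F\<^esub>)}"

definition vadd :: "(nat, 'b) ring_scheme \<Rightarrow> nat \<Rightarrow> (nat \<Rightarrow> nat) \<Rightarrow> (nat \<Rightarrow> nat) \<Rightarrow> (nat \<Rightarrow> nat)" where
  "vadd F n u v = (\<lambda>i. if i < n then u i \<oplus>\<^bsub>F\<^esub> v i else \<zero>\<^bsub>F\<^esub>)"

definition vsmult :: "(nat, 'b) ring_scheme \<Rightarrow> nat \<Rightarrow> nat \<Rightarrow> (nat \<Rightarrow> nat) \<Rightarrow> (nat \<Rightarrow> nat)" where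
  "vsmult F n a v = (\<lambda>i. if i < n then a \<otimes>\<^bsub>F\<^esub> v i else \<zero>\<^bsub>F\<^esub>)"

definition lincomb :: "(nat, 'b) ring_scheme \<Rightarrow> nat \<Rightarrow> nat \<Rightarrow> (nat \<Rightarrow> nat) \<Rightarrow> (nat \<Rightarrow> nat \<Rightarrow> nat) \<Rightarrow> (nat \<Rightarrow> nat)" where
  "lincomb F n k a b = (\<lambda>i. if i < n then finsum F (\<lambda>j. a j \<otimes>\<^bsub>F\<^esub> b j i) {..<k} else \<zero>\<^bsub>F\<^esub>)"

definition subspace_vecs :: "(nat, 'b) ring_scheme \<Rightarrow> nat \<Rightarrow> (nat \<Rightarrow> nat) set \<Rightarrow> bool" where
  "subspace_vecs F n C \<longleftrightarrow> C \<subseteq> vecs F n \<and> (\<lambda>i. \<zero>\<^bsub>F\<^esub>) \<in> C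
     \<and> (\<forall>u\<in>C. \<forall>v\<in>C. vadd F n u v \<in> C)
     \<and> (\<forall>a\<in>carrier F. \<forall>v\<in>C. vsmult F n a v \<in> C)"

text \<open>Linear [n,k]_q code: a subspace of F^n having a basis b_0..b_{k-1}, i.e.
  every codeword is a unique F-linear combination of the b_j.\<close>
definition linear_code :: "(nat, 'b) ring_scheme \<Rightarrow> nat \<Rightarrow> nat \<Rightarrow> (nat \<Rightarrow> nat) set \<Rightarrow> bool" where
  "linear_code F n k C \<longleftrightarrow> subspace_vecs F n C \<and>
     (\<exists>b. (\<forall>j<k. b j \<in> C) \<and>
          bij_betw (\<lambda>a. lincomb F n k a b)
                   {a. (\<forall>j<k. a j \<in> carrier F) \<and> (\<forall>j\<ge>k. a j = \<zero>\<^bsub>F\<^esub>)} C)"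

definition hamming_dist :: "nat \<Rightarrow> (nat \<Rightarrow> nat) \<Rightarrow> (nat \<Rightarrow> nat) \<Rightarrow> nat" where
  "hamming_dist n u v = card {i. i < n \<and> u i \<noteq> v i}"

definition hamming_ball :: "(nat, 'b) ring_scheme \<Rightarrow> nat \<Rightarrow> real \<Rightarrow> (nat \<Rightarrow> nat) \<Rightarrow> (nat \<Rightarrow> nat) set" where
  "hamming_ball F n t v = {u \<in> vecs F n. real (hamming_dist n u v) \<le> t}"

definition list_decodable :: "(nat, 'b) ring_scheme \<Rightarrow> nat \<Rightarrow> real \<Rightarrow> nat \<Rightarrow> (nat \<Rightarrow> nat) set \<Rightarrow> bool" where
  "list_decodable F n r L C \<longleftrightarrow>
     (\<forall>v\<in>vecs F n. card (hamming_ball F n (r * real n) v \<inter> C) \<le> L)"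

end

theory Submission
  imports Defs "HOL-Library.FuncSet"
begin

text \<open>
  Write t = r n and suppose k > n - \<lceil>(L + 1) / L * t\<rceil>, i.e. L (n - k) < (L + 1) t; we find
  L + 1 codewords in one Hamming ball of radius t. If n - k + L \<le> t, the subcode vanishing
  on the first k - L coordinates has q^L > L words, all of weight at most t. Otherwise n - k
  is large. If some nonzero codeword has weight at most t and q > L, its scalar multiples
  suffice. If q \<le> L, the average weight of a subcode of dimension 3 L + 1 is at most
  (1 - 1/q) times its support size, which forces more than L of its words to have weight
  at most t. In the remaining case every nonzero codeword is heavier than t. Take codewords b
  and a vanishing on the first k - 1 and k - 2 coordinates, a not a multiple of b. Every
  position p in the support of b is a root of exactly one member of the pencil a + l b,
  and no member has many roots, so L members y_m with pairwise distinct roots P_m exist.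
  A centre agreeing with a off the support of b and copying y_m on a private block of
  positions is then within distance t of 0 and of every y_m.
\<close>

lemma card_funcs_with_default:
  fixes S :: "'a set" and Y :: "'b set" and z :: 'b
  assumes "finite S" "finite Y"
  defines "M \<equiv> {f. (\<forall>i\<in>S. f i \<in> Y) \<and> (\<forall>i. i \<notin> S \<longrightarrow> f i = z)}"
  shows "finite M" and "card M = card Y ^ card S"
proof -
  have bij: "bij_betw (\<lambda>f i. if i \<in> S then f i else z) (S \<rightarrow>\<^sub>E Y) M"
  proof (rule bij_betwI[where g = "\<lambda>f. restrict f S"])
    show "(\<lambda>i. if i \<in> S then restrict f S i else z) = f" if "f \<in> M" for f
      using that unfolding M_def by (auto simp: fun_eq_iff)
  qed (auto simp: M_def fun_eq_iff PiE_def extensional_def)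
  show "finite M" using bij_betw_finite[OF bij] assms by (simp add: finite_PiE)
  show "card M = card Y ^ card S" using bij_betw_same_card[OF bij] assms by (simp add: card_PiE)
qed

lemma card_preimage_bij_betw:
  assumes "bij_betw g A B" and "I \<subseteq> B"
  shows "card {p\<in>A. g p \<in> I} = card I"
proof -
  have "bij_betw g {p\<in>A. g p \<in> I} I"
    using assms unfolding bij_betw_def inj_on_def by auto
  then show ?thesis by (rule bij_betw_same_card)
qed

lemma exists_block_labelling:
  assumes "finite A" and "L * \<rho> \<le> card A"
  obtains label :: "'a \<Rightarrow> nat"
  where "card {p\<in>A. label p < L} = L * \<rho>" and "\<And>m. m < L \<Longrightarrow> card {p\<in>A. label p = m} = \<rho>"
proof -
  obtain g where g: "bij_betw g A {0..<card A}" using ex_bij_betw_finite_nat assms(1) by blast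
  define label where "label p = (if g p < L * \<rho> then g p div \<rho> else L)" for p
  have "{p\<in>A. label p < L} = {p\<in>A. g p \<in> {0..<L * \<rho>}}"
    unfolding label_def by (auto intro: less_mult_imp_div_less)
  then have "card {p\<in>A. label p < L} = L * \<rho>"
    using card_preimage_bij_betw[OF g, of "{0..<L * \<rho>}"] assms(2) by simp
  moreover have "card {p\<in>A. label p = m} = \<rho>" if m: "m < L" for m
  proof -
    have "(m + 1) * \<rho> \<le> L * \<rho>" using m by (intro mult_le_mono1) simp
    have "label p = m \<longleftrightarrow> g p \<in> {m * \<rho>..<(m + 1) * \<rho>}" for p
    proof
      assume "label p = m"
      then have "g p < L * \<rho>" "g p div \<rho> = m" using m unfolding label_def by (auto split: if_splits)
      moreover from this have "0 < \<rho>" by (cases \<rho>) auto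
      ultimately show "g p \<in> {m * \<rho>..<(m + 1) * \<rho>}"
        using div_times_less_eq_dividend[of "g p" \<rho>] dividend_less_div_times[of \<rho> "g p"] by simp
    next
      assume "g p \<in> {m * \<rho>..<(m + 1) * \<rho>}"
      then have "g p div \<rho> = m" by (intro div_nat_eqI) (simp_all add: mult.commute)
      then show "label p = m"
        using \<open>g p \<in> _\<close> \<open>(m + 1) * \<rho> \<le> L * \<rho>\<close> unfolding label_def by auto
    qed
    then have "{p\<in>A. label p = m} = {p\<in>A. g p \<in> {m * \<rho>..<(m + 1) * \<rho>}}" by blast
    then show ?thesis
      using card_preimage_bij_betw[OF g, of "{m * \<rho>..<(m + 1) * \<rho>}"] assms(2) \<open>(m + 1) * \<rho> \<le> L * \<rho>\<close>
      by simp
  qed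
  ultimately show thesis by (rule that)
qed

text \<open>The arithmetic of the averaging argument: N words of a subcode supported on d + J
  coordinates, at most L of them of weight at most t.\<close>

lemma plotkin_arith:
  fixes q L N d J t :: nat
  assumes q: "1 \<le> q" "q \<le> L" and N: "2 * L^3 \<le> N" and d: "2 * L^2 * J \<le> d" and J: "1 \<le> J"
    and t: "L * d + 1 \<le> (L + 1) * t"
  shows "(d + J) * ((q - 1) * N) < q * ((N - L) * (t + 1))"
proof (rule ccontr)
  \<comment> \<open>Replace q by L, then t + 1 by L d / (L + 1): this gives d N \<le> L^3 d + (L^2 - 1) J N,
    and N \<ge> 2 L^3 turns it into d \<le> 2 (L^2 - 1) J.\<close>
  assume "\<not> ?thesis"
  then have main: "q * ((N - L) * (t + 1)) \<le> (d + J) * ((q - 1) * N)" by simp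
  obtain p where p: "q = p + 1" using q by (metis add.commute le_Suc_ex)
  obtain l where l: "L = l + 1" using q by (metis add.commute le_Suc_ex le_trans)
  have "L \<le> L^3" using q by (simp add: self_le_power)
  then have "L \<le> N" using N by linarith
  then obtain M where M: "N = L + M" using le_Suc_ex by blast
  have pl: "(l + 1) * p \<le> (p + 1) * l" using p l q by (simp add: algebra_simps)
  have "(p + 1) * ((l + 1) * (M * (t + 1))) = (l + 1) * (q * ((N - L) * (t + 1)))"
    unfolding p M by (simp only: add_diff_cancel_left' mult.left_commute)
  also have "\<dots> \<le> (l + 1) * ((d + J) * ((q - 1) * N))" using main by (rule mult_left_mono) simp
  also have "\<dots> = ((l + 1) * p) * ((d + J) * N)" using p by (simp add: algebra_simps)
  also have "\<dots> \<le> ((p + 1) * l) * ((d + J) * N)" using pl by (rule mult_right_mono) simp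
  also have "\<dots> = (p + 1) * (l * ((d + J) * N))" by (simp add: algebra_simps)
  finally have main_L: "(l + 1) * (M * (t + 1)) \<le> l * ((d + J) * N)"
    by (simp only: nat_mult_le_cancel1 zero_less_Suc Suc_eq_plus1[symmetric])
  have "(l + 1) * d \<le> (l + 2) * (t + 1)" using t l by (simp add: algebra_simps)
  then have "((l + 1) * d) * ((l + 1) * M) \<le> ((l + 2) * (t + 1)) * ((l + 1) * M)"
    by (rule mult_right_mono) simp
  also have "\<dots> = (l + 2) * ((l + 1) * (M * (t + 1)))" by (simp add: algebra_simps)
  also have "\<dots> \<le> (l + 2) * (l * ((d + J) * N))" using main_L by (rule mult_left_mono) simp
  finally have main_t: "((l + 1) * d) * ((l + 1) * M) \<le> (l + 2) * (l * ((d + J) * N))" .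
  have "(l + 2) * (l * ((d + J) * N)) + d * N = (l + 1) * (l + 1) * d * N + (l * l + 2 * l) * J * N"
    by (simp add: algebra_simps)
  moreover have "(l + 1) * (l + 1) * d * N = (l + 1)^3 * d + ((l + 1) * d) * ((l + 1) * M)"
    by (simp add: M l algebra_simps power3_eq_cube)
  ultimately have dN: "d * N \<le> (l + 1)^3 * d + (l * l + 2 * l) * J * N" using main_t by linarith
  have "2 * ((l + 1)^3 * d) \<le> d * N" using N l by (simp add: mult.commute mult_right_mono)
  with dN have "d * N \<le> 2 * ((l * l + 2 * l) * J * N)" by linarith
  then have "d * N \<le> (2 * ((l * l + 2 * l) * J)) * N" by (simp only: mult.assoc)
  moreover have "0 < N" using M l by simp
  ultimately have "d \<le> 2 * ((l * l + 2 * l) * J)" by (simp only: mult_le_cancel2)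
  moreover have "2 * (l + 1)^2 * J \<le> d" using d l by simp
  ultimately show False using J by (simp add: algebra_simps power2_eq_square)
qed

text \<open>The arithmetic of the pencil argument: among the last d + 2 coordinates, b has Z zeros
  and W = t + 1 + \<rho> nonzero entries; \<rho> is the block size of the centre.\<close>

lemma pencil_arith:
  fixes Z W d t L \<rho> :: nat
  assumes ZW: "Z + W = d + 2" and Z: "1 \<le> Z" and W: "W = t + 1 + \<rho>" and L: "1 \<le> L"
    and t: "L * d + 1 \<le> (L + 1) * t" and d: "L^2 \<le> d"
  shows "(L - 1) * (d + 1 - t) < W" and "L * \<rho> + L \<le> W" and "Z + L * \<rho> \<le> t"
proof -
  obtain l where l: "L = l + 1" using L by (metis add.commute le_Suc_ex)
  have t': "(l + 1) * d + 1 \<le> (l + 2) * t" using t by (simp add: l)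
  have key: "l * (d + 1) \<le> (l + 1) * t"
  proof -
    have "(l + 2) * (l * (d + 1)) \<le> (l + 1) * ((l + 1) * d + 1)"
      using d by (simp add: l algebra_simps power2_eq_square)
    also have "\<dots> \<le> (l + 1) * ((l + 2) * t)" using t' by (rule mult_left_mono) simp
    also have "\<dots> = (l + 2) * ((l + 1) * t)" by (rule mult.left_commute)
    finally show ?thesis by (simp only: nat_mult_le_cancel1 zero_less_Suc add_2_eq_Suc')
  qed
  have Wd: "l * W \<le> l * (d + 1)" using ZW Z by (intro mult_left_mono) simp_all
  with key have lW: "l * W \<le> (l + 1) * t" by linarith
  have "t \<le> d" using ZW Z W by simp
  then show "(L - 1) * (d + 1 - t) < W"
    using key W by (simp add: l diff_mult_distrib2 algebra_simps)
  show "L * \<rho> + L \<le> W" using lW W by (simp add: l algebra_simps)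
  show "Z + L * \<rho> \<le> t" using Wd W ZW t by (simp add: l algebra_simps)
qed

lemma two_mul_cube_le_pow: "2 * L^3 \<le> (2::nat) ^ (3 * L + 1)"
proof -
  have "L^3 \<le> (2 ^ L)^3" using less_exp[of L] by (intro power_mono) simp_all
  then show ?thesis by (simp add: power_mult[symmetric] mult.commute)
qed

lemma card_le_card_image_mult:
  assumes "finite A" and "\<And>y. y \<in> f ` A \<Longrightarrow> card {x\<in>A. f x = y} \<le> K"
  shows "card A \<le> card (f ` A) * K"
proof -
  have "card A = card (\<Union>y\<in>f ` A. {x\<in>A. f x = y})" by (rule arg_cong[of _ _ card]) auto
  also have "\<dots> \<le> (\<Sum>y\<in>f ` A. card {x\<in>A. f x = y})" by (rule card_UN_le) (simp add: assms(1))
  also have "\<dots> \<le> (\<Sum>y\<in>f ` A. K)" using assms(2) by (intro sum_mono)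
  finally show ?thesis by simp
qed

lemma exists_distinct_values:
  assumes "finite A" and "L \<le> card (f ` A)"
  obtains P where "\<And>m. m < L \<Longrightarrow> P m \<in> A" and "inj_on (f \<circ> P) {..<L}"
proof -
  obtain V where V: "V \<subseteq> f ` A" "card V = L" using assms(2) by (meson obtain_subset_with_card_n)
  have "finite V" using V(1) assms(1) by (simp add: finite_subset)
  then obtain \<mu> where \<mu>: "bij_betw \<mu> {0..<L} V" using ex_bij_betw_nat_finite V(2) by blast
  define P where "P m = inv_into A f (\<mu> m)" for m
  have \<mu>_img: "\<mu> m \<in> f ` A" if "m < L" for m using \<mu> V(1) that by (auto simp: bij_betw_def)
  then have "P m \<in> A" "f (P m) = \<mu> m" if "m < L" for m
    using that unfolding P_def by (auto intro: inv_into_into f_inv_into_f)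
  moreover have "inj_on \<mu> {..<L}" using \<mu> by (simp add: bij_betw_def atLeast0LessThan)
  ultimately show thesis using that[of P] by (auto simp: inj_on_def)
qed

section \<open>Linear codes over a finite field\<close>

locale code_over_finite_field = field R for R :: "(nat, 'b) ring_scheme" (structure) +
  fixes n k :: nat and C :: "(nat \<Rightarrow> nat) set"
  assumes finite_carrier: "finite (carrier R)" and linear: "linear_code R n k C"
begin

abbreviation q :: nat where "q \<equiv> card (carrier R)"

abbreviation weight :: "(nat \<Rightarrow> nat) \<Rightarrow> nat" where "weight c \<equiv> hamming_dist n c (\<lambda>i. \<zero>)"

lemma vecs_funcs_with_default:
  "vecs R n = {f. (\<forall>i\<in>{..<n}. f i \<in> carrier R) \<and> (\<forall>i. i \<notin> {..<n} \<longrightarrow> f i = \<zero>)}"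
  unfolding vecs_def by auto

lemma finite_vecs: "finite (vecs R n)" and card_vecs: "card (vecs R n) = q ^ n"
  using card_funcs_with_default[of "{..<n}" "carrier R" \<zero>] finite_carrier
  unfolding vecs_funcs_with_default by auto

lemma vecs_in_carrier: "u \<in> vecs R n \<Longrightarrow> u i \<in> carrier R"
  unfolding vecs_def by (cases "i < n") auto

lemma vecs_beyond_length: "u \<in> vecs R n \<Longrightarrow> n \<le> i \<Longrightarrow> u i = \<zero>"
  unfolding vecs_def by auto

lemma zero_in_vecs: "(\<lambda>i. \<zero>) \<in> vecs R n"
  unfolding vecs_def by simp

lemma q_ge_2: "2 \<le> q"
proof -
  have "card {\<zero>, \<one>} \<le> q" using finite_carrier by (intro card_mono) auto
  then show ?thesis using zero_not_one by simp
qed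

lemma code_subset_vecs: "C \<subseteq> vecs R n"
  and zero_in_code: "(\<lambda>i. \<zero>) \<in> C"
  and vadd_in_code: "u \<in> C \<Longrightarrow> v \<in> C \<Longrightarrow> vadd R n u v \<in> C"
  and vsmult_in_code: "a \<in> carrier R \<Longrightarrow> v \<in> C \<Longrightarrow> vsmult R n a v \<in> C"
  using linear unfolding linear_code_def subspace_vecs_def by auto

lemma code_in_carrier: "u \<in> C \<Longrightarrow> u i \<in> carrier R"
  using code_subset_vecs vecs_in_carrier by blast

lemma finite_code: "finite C"
  using code_subset_vecs finite_vecs by (rule finite_subset)

lemma card_code: "card C = q ^ k"
proof -
  obtain b where "bij_betw (\<lambda>a. lincomb R n k a b)
      {a. (\<forall>j<k. a j \<in> carrier R) \<and> (\<forall>j\<ge>k. a j = \<zero>)} C"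
    using linear unfolding linear_code_def by blast
  then have "card C = card {a. (\<forall>j<k. a j \<in> carrier R) \<and> (\<forall>j\<ge>k. a j = \<zero>)}"
    by (simp add: bij_betw_same_card)
  also have "{a. (\<forall>j<k. a j \<in> carrier R) \<and> (\<forall>j\<ge>k. a j = \<zero>)}
      = {a. (\<forall>j\<in>{..<k}. a j \<in> carrier R) \<and> (\<forall>j. j \<notin> {..<k} \<longrightarrow> a j = \<zero>)}"
    by (auto simp: not_less)
  finally show ?thesis using card_funcs_with_default[of "{..<k}" "carrier R" \<zero>] finite_carrier by simp
qed

lemma k_le_n: "k \<le> n"
proof -
  have "q ^ k \<le> q ^ n"
    unfolding card_code[symmetric] card_vecs[symmetric]
    using finite_vecs code_subset_vecs by (rule card_mono)
  then show ?thesis using q_ge_2 by (simp add: power_le_imp_le_exp)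
qed

definition vsub :: "(nat \<Rightarrow> nat) \<Rightarrow> (nat \<Rightarrow> nat) \<Rightarrow> (nat \<Rightarrow> nat)" where
  "vsub u w = (\<lambda>i. if i < n then u i \<ominus> w i else \<zero>)"

lemma vsub_in_code:
  assumes "u \<in> C" "w \<in> C"
  shows "vsub u w \<in> C"
proof -
  have "vsub u w = vadd R n u (vsmult R n (\<ominus> \<one>) w)"
    using assms code_in_carrier
    by (auto simp: fun_eq_iff vsub_def vadd_def vsmult_def minus_eq l_minus)
  then show ?thesis using assms vadd_in_code vsmult_in_code by simp
qed

lemma vsub_right_cancel:
  assumes "u \<in> vecs R n" "u' \<in> vecs R n" "w \<in> vecs R n" and "vsub u w = vsub u' w"
  shows "u = u'"
proof
  fix i
  show "u i = u' i"
  proof (cases "i < n")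
    case True
    then have "u i \<ominus> w i = u' i \<ominus> w i" using fun_cong[OF assms(4), of i] by (simp add: vsub_def)
    then show ?thesis using assms(1-3) vecs_in_carrier by (metis add.inv_closed a_minus_def add.r_cancel)
  next
    case False
    then show ?thesis using assms(1,2) vecs_beyond_length by (metis not_less)
  qed
qed

text \<open>Subtracting a fixed representative maps each fibre of the restriction to S into the
  words vanishing on S.\<close>

lemma card_le_card_vanishing:
  assumes E: "E \<subseteq> vecs R n" and vsub_closed: "\<And>u w. u \<in> E \<Longrightarrow> w \<in> E \<Longrightarrow> vsub u w \<in> E"
    and S: "finite S"
  shows "card E \<le> q ^ card S * card {c\<in>E. \<forall>i\<in>S. c i = \<zero>}"
proof -
  define restr where "restr c = (\<lambda>i. if i \<in> S then c i else \<zero>)" for c :: "nat \<Rightarrow> nat"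
  define K where "K = {c\<in>E. \<forall>i\<in>S. c i = \<zero>}"
  define M where "M = {f. (\<forall>i\<in>S. f i \<in> carrier R) \<and> (\<forall>i. i \<notin> S \<longrightarrow> f i = \<zero>)}"
  define rep where "rep c = (SOME c'. c' \<in> E \<and> restr c' = restr c)" for c
  define \<psi> where "\<psi> c = (restr c, vsub c (rep c))" for c
  have rep: "rep c \<in> E" "restr (rep c) = restr c" if "c \<in> E" for c
    using someI[of "\<lambda>c'. c' \<in> E \<and> restr c' = restr c" c] that unfolding rep_def by auto
  have "inj_on \<psi> E"
  proof (rule inj_onI)
    fix c c' assume c: "c \<in> E" "c' \<in> E" and "\<psi> c = \<psi> c'"
    then have "restr c = restr c'" "vsub c (rep c) = vsub c' (rep c)"
      unfolding \<psi>_def rep_def by auto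
    then show "c = c'" using c rep vsub_right_cancel E by blast
  qed
  then have "card E = card (\<psi> ` E)" by (simp add: card_image)
  also have "\<dots> \<le> card (restr ` E \<times> K)"
  proof (rule card_mono)
    have "finite E" using E finite_vecs finite_subset by blast
    then show "finite (restr ` E \<times> K)" unfolding K_def by simp
    have "vsub c (rep c) \<in> K" if "c \<in> E" for c
    proof -
      have "rep c i = c i" if "i \<in> S" for i using rep(2)[OF \<open>c \<in> E\<close>] that
        unfolding restr_def by meson
      then show ?thesis using that E vecs_in_carrier vsub_closed rep(1)
        unfolding K_def vsub_def by (auto simp: a_minus_def r_neg)
    qed
    then show "\<psi> ` E \<subseteq> restr ` E \<times> K" unfolding \<psi>_def by auto
  qed
  also have "\<dots> = card (restr ` E) * card K" by (rule card_cartesian_product)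
  also have "\<dots> \<le> q ^ card S * card K"
  proof -
    have "restr ` E \<subseteq> M" using E vecs_in_carrier unfolding M_def restr_def by auto
    then have "card (restr ` E) \<le> card M"
      using card_funcs_with_default(1)[OF S finite_carrier] by (intro card_mono) (simp_all add: M_def)
    then show ?thesis
      using card_funcs_with_default(2)[OF S finite_carrier] by (simp add: M_def)
  qed
  finally show ?thesis unfolding K_def .
qed

definition shortened :: "nat \<Rightarrow> (nat \<Rightarrow> nat) set" where
  "shortened s = {c\<in>C. \<forall>i<s. c i = \<zero>}"

lemma shortened_subset_code: "shortened s \<subseteq> C"
  unfolding shortened_def by auto

lemma vsub_in_shortened: "u \<in> shortened s \<Longrightarrow> w \<in> shortened s \<Longrightarrow> vsub u w \<in> shortened s"
  unfolding shortened_def using vsub_in_code by (auto simp: vsub_def)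

lemma card_shortened:
  assumes "s \<le> k"
  shows "q ^ (k - s) \<le> card (shortened s)"
proof -
  have "q ^ k \<le> q ^ card {..<s} * card (shortened s)"
    using card_le_card_vanishing[OF code_subset_vecs vsub_in_code, of "{..<s}"] card_code
    unfolding shortened_def by (simp add: Ball_def)
  then have "q ^ s * q ^ (k - s) \<le> q ^ s * card (shortened s)"
    using assms by (simp flip: power_add)
  then show ?thesis using q_ge_2 by simp
qed

lemma weight_shortened:
  assumes "c \<in> shortened s"
  shows "weight c = card {i\<in>{s..<n}. c i \<noteq> \<zero>}"
proof -
  have "{i. i < n \<and> c i \<noteq> \<zero>} = {i\<in>{s..<n}. c i \<noteq> \<zero>}"
    using assms unfolding shortened_def by (auto simp: not_less[symmetric])
  then show ?thesis unfolding hamming_dist_def by simp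
qed

lemma weight_shortened_le: "c \<in> shortened s \<Longrightarrow> weight c \<le> n - s"
  using card_mono[of "{s..<n}" "{i\<in>{s..<n}. c i \<noteq> \<zero>}"] weight_shortened[of c s] by fastforce

section \<open>Crowded Hamming balls\<close>

definition crowded_ball :: "nat \<Rightarrow> nat \<Rightarrow> bool" where
  "crowded_ball L t \<longleftrightarrow>
     (\<exists>S v. S \<subseteq> C \<and> card S = L + 1 \<and> v \<in> vecs R n \<and> (\<forall>c\<in>S. hamming_dist n c v \<le> t))"

lemma not_list_decodable_if_crowded_ball:
  assumes "crowded_ball L t" and "real t \<le> r * real n"
  shows "\<not> list_decodable R n r L C"
proof
  assume decodable: "list_decodable R n r L C"
  obtain S v where S: "S \<subseteq> C" "card S = L + 1" "v \<in> vecs R n" "\<forall>c\<in>S. hamming_dist n c v \<le> t"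
    using assms(1) unfolding crowded_ball_def by blast
  have "S \<subseteq> hamming_ball R n (r * real n) v \<inter> C"
    using S code_subset_vecs assms(2) unfolding hamming_ball_def by force
  then have "card S \<le> card (hamming_ball R n (r * real n) v \<inter> C)"
    using finite_code by (intro card_mono) auto
  also have "\<dots> \<le> L" using decodable S(3) unfolding list_decodable_def by blast
  finally show False using S(2) by simp
qed

lemma crowded_ball_if_light_codewords:
  assumes "L + 1 \<le> card {c\<in>C. weight c \<le> t}"
  shows "crowded_ball L t"
proof -
  obtain S where "S \<subseteq> {c\<in>C. weight c \<le> t}" "card S = L + 1"
    using assms by (meson obtain_subset_with_card_n)
  then show ?thesis unfolding crowded_ball_def using zero_in_vecs by blast
qed

lemma crowded_ball_intro:
  assumes y: "\<And>m. m < L \<Longrightarrow> y m \<in> C \<and> y m \<noteq> (\<lambda>i. \<zero>)" and "inj_on y {..<L}"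
    and "v \<in> vecs R n" and "hamming_dist n (\<lambda>i. \<zero>) v \<le> t" and "\<And>m. m < L \<Longrightarrow> hamming_dist n (y m) v \<le> t"
  shows "crowded_ball L t"
proof -
  have "(\<lambda>i. \<zero>) \<notin> y ` {..<L}" using y by fastforce
  then have "card (insert (\<lambda>i. \<zero>) (y ` {..<L})) = L + 1"
    using \<open>inj_on y {..<L}\<close> by (simp add: card_image)
  then show ?thesis unfolding crowded_ball_def using assms zero_in_code
    by (intro exI[of _ "insert (\<lambda>i. \<zero>) (y ` {..<L})"] exI[of _ v]) auto
qed

lemma crowded_ball_if_small_redundancy:
  assumes "L \<le> k" and "n - k + L \<le> t"
  shows "crowded_ball L t"
proof (rule crowded_ball_if_light_codewords)
  have "L + 1 \<le> 2 ^ L" by (simp add: Suc_le_eq)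
  also have "\<dots> \<le> q ^ (k - (k - L))" using q_ge_2 assms(1) by (simp add: power_mono)
  also have "\<dots> \<le> card (shortened (k - L))" by (rule card_shortened) simp
  also have "\<dots> \<le> card {c\<in>C. weight c \<le> t}"
    using assms weight_shortened_le shortened_subset_code finite_code
    by (intro card_mono) force+
  finally show "L + 1 \<le> card {c\<in>C. weight c \<le> t}" .
qed

lemma crowded_ball_if_light_codeword:
  assumes q: "L + 1 \<le> q" and c: "c \<in> C" "c \<noteq> (\<lambda>i. \<zero>)" and light: "weight c \<le> t"
  shows "crowded_ball L t"
proof (rule crowded_ball_if_light_codewords)
  obtain i0 where i0: "c i0 \<noteq> \<zero>" using c(2) by auto
  then have "i0 < n" using c(1) code_subset_vecs vecs_beyond_length by (meson not_le subsetD)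
  have "inj_on (\<lambda>a. vsmult R n a c) (carrier R)"
  proof (rule inj_onI)
    fix a b assume ab: "a \<in> carrier R" "b \<in> carrier R" and "vsmult R n a c = vsmult R n b c"
    then have "a \<otimes> c i0 = b \<otimes> c i0"
      using fun_cong[of _ _ i0] \<open>i0 < n\<close> unfolding vsmult_def by metis
    then show "a = b" using m_rcancel[OF i0 code_in_carrier[OF c(1)] ab] by simp
  qed
  then have "q = card ((\<lambda>a. vsmult R n a c) ` carrier R)" by (simp add: card_image)
  also have "\<dots> \<le> card {c\<in>C. weight c \<le> t}"
  proof (rule card_mono)
    have "weight (vsmult R n a c) \<le> weight c" if "a \<in> carrier R" for a
      using that code_in_carrier[OF c(1)] unfolding hamming_dist_def vsmult_def
      by (intro card_mono) auto
    then show "(\<lambda>a. vsmult R n a c) ` carrier R \<subseteq> {c\<in>C. weight c \<le> t}"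
      using c(1) light vsmult_in_code by force
  qed (simp add: finite_code)
  finally show "L + 1 \<le> card {c\<in>C. weight c \<le> t}" using q by simp
qed

section \<open>Small fields: averaging the weights\<close>

lemma card_nonzero_at_coordinate:
  assumes E: "E \<subseteq> vecs R n" and vsub_closed: "\<And>u w. u \<in> E \<Longrightarrow> w \<in> E \<Longrightarrow> vsub u w \<in> E"
  shows "q * card {c\<in>E. c i \<noteq> \<zero>} \<le> (q - 1) * card E"
proof -
  have "finite E" using E finite_vecs finite_subset by blast
  have "card E \<le> q * card {c\<in>E. c i = \<zero>}"
    using card_le_card_vanishing[OF E vsub_closed, of "{i}"] by simp
  moreover have "card {c\<in>E. c i \<noteq> \<zero>} = card E - card {c\<in>E. c i = \<zero>}"
  proof -
    have "{c\<in>E. c i \<noteq> \<zero>} = E - {c\<in>E. c i = \<zero>}" by auto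
    then show ?thesis using \<open>finite E\<close> by (simp add: card_Diff_subset)
  qed
  ultimately show ?thesis by (simp add: diff_mult_distrib diff_mult_distrib2)
qed

lemma sum_weight_shortened:
  "q * (\<Sum>c\<in>shortened s. weight c) \<le> (n - s) * ((q - 1) * card (shortened s))"
proof -
  have fin: "finite (shortened s)" using shortened_subset_code finite_code finite_subset by blast
  have "(\<Sum>c\<in>shortened s. weight c) = (\<Sum>c\<in>shortened s. \<Sum>i\<in>{s..<n}. of_bool (c i \<noteq> \<zero>))"
    by (intro sum.cong) (simp_all add: weight_shortened Int_def)
  also have "\<dots> = (\<Sum>i\<in>{s..<n}. card {c\<in>shortened s. c i \<noteq> \<zero>})"
    by (subst sum.swap) (simp add: fin Int_def)
  finally have "q * (\<Sum>c\<in>shortened s. weight c) = (\<Sum>i\<in>{s..<n}. q * card {c\<in>shortened s. c i \<noteq> \<zero>})"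
    by (simp add: sum_distrib_left)
  also have "\<dots> \<le> (\<Sum>i\<in>{s..<n}. (q - 1) * card (shortened s))"
    using card_nonzero_at_coordinate[OF _ vsub_in_shortened] shortened_subset_code code_subset_vecs
    by (intro sum_mono) blast
  finally show ?thesis by simp
qed

lemma crowded_ball_if_small_field:
  assumes q: "q \<le> L" and J: "1 \<le> J" "J \<le> k" and N: "2 * L^3 \<le> 2^J"
    and d: "2 * L^2 * J \<le> n - k" and t: "L * (n - k) + 1 \<le> (L + 1) * t"
  shows "crowded_ball L t"
proof (rule ccontr)
  assume not_crowded: "\<not> crowded_ball L t"
  define E where "E = shortened (k - J)"
  define light where "light = {c\<in>E. weight c \<le> t}"
  have fin: "finite E" unfolding E_def using shortened_subset_code finite_code finite_subset by blast
  have "card light \<le> L"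
  proof (rule ccontr)
    assume "\<not> card light \<le> L"
    moreover have "card light \<le> card {c\<in>C. weight c \<le> t}"
      unfolding light_def E_def using shortened_subset_code finite_code by (intro card_mono) auto
    ultimately show False using crowded_ball_if_light_codewords not_crowded by simp
  qed
  then have "card E - L \<le> card (E - light)"
    using diff_card_le_card_Diff[of light E] fin unfolding light_def by simp
  then have "(card E - L) * (t + 1) \<le> card (E - light) * (t + 1)" by (rule mult_right_mono) simp
  also have "\<dots> \<le> (\<Sum>c\<in>E - light. weight c)"
    using sum_mono[of "E - light" "\<lambda>_. t + 1" weight] unfolding light_def by fastforce
  also have "\<dots> \<le> (\<Sum>c\<in>E. weight c)" using fin by (intro sum_mono2) auto
  finally have "q * ((card E - L) * (t + 1)) \<le> q * (\<Sum>c\<in>E. weight c)" by simp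
  also have "\<dots> \<le> (n - k + J) * ((q - 1) * card E)"
    using sum_weight_shortened[of "k - J"] J k_le_n unfolding E_def by simp
  finally have "q * ((card E - L) * (t + 1)) \<le> (n - k + J) * ((q - 1) * card E)" .
  moreover have "2 * L^3 \<le> card E"
  proof -
    have "2 ^ J \<le> q ^ J" using q_ge_2 by (simp add: power_mono)
    also have "\<dots> \<le> card E" using card_shortened[of "k - J"] J unfolding E_def by simp
    finally show ?thesis using N by simp
  qed
  moreover have "1 \<le> q" using q_ge_2 by simp
  ultimately show False using plotkin_arith[OF _ q _ d J(1) t] by (simp add: not_le[symmetric])
qed

section \<open>Heavy codes: pencils of codewords\<close>

lemma add_mult_eq_zero_iff:
  assumes a: "a \<in> carrier R" and b: "b \<in> carrier R" "b \<noteq> \<zero>" and l: "l \<in> carrier R"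
  shows "a \<oplus> l \<otimes> b = \<zero> \<longleftrightarrow> l = \<ominus> (a \<otimes> inv b)"
proof -
  have "b \<in> Units R" using b field_Units by blast
  then have u: "inv b \<in> carrier R" "b \<otimes> inv b = \<one>" by auto
  have "l = (a \<oplus> l \<otimes> b) \<otimes> inv b \<ominus> a \<otimes> inv b"
  proof -
    have "l = l \<otimes> (b \<otimes> inv b)" using u l by simp
    also have "\<dots> = (a \<oplus> l \<otimes> b) \<otimes> inv b \<ominus> a \<otimes> inv b" using a b(1) u(1) l by algebra
    finally show ?thesis .
  qed
  moreover have "a \<oplus> \<ominus> (a \<otimes> inv b) \<otimes> b = a \<ominus> a \<otimes> (b \<otimes> inv b)"
    using a b(1) u(1) by algebra
  ultimately show ?thesis using a u(1) l by (auto simp: u(2) minus_eq r_neg)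
qed

definition pencil :: "(nat \<Rightarrow> nat) \<Rightarrow> (nat \<Rightarrow> nat) \<Rightarrow> nat \<Rightarrow> (nat \<Rightarrow> nat)" where
  "pencil a b l = vadd R n a (vsmult R n l b)"

lemma pencil_apply: "pencil a b l p = (if p < n then a p \<oplus> l \<otimes> b p else \<zero>)"
  unfolding pencil_def vadd_def vsmult_def by simp

lemma pencil_in_code: "a \<in> C \<Longrightarrow> b \<in> C \<Longrightarrow> l \<in> carrier R \<Longrightarrow> pencil a b l \<in> C"
  unfolding pencil_def using vadd_in_code vsmult_in_code by blast

lemma pencil_eq_left: "a \<in> C \<Longrightarrow> l \<in> carrier R \<Longrightarrow> b p = \<zero> \<Longrightarrow> pencil a b l p = a p"
  using code_in_carrier code_subset_vecs vecs_beyond_length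
  by (auto simp: pencil_apply subset_iff not_less)

lemma exists_pencil:
  assumes "2 \<le> k"
  obtains a b where "a \<in> shortened (k - 2)" "b \<in> shortened (k - 1)" "b \<noteq> (\<lambda>i. \<zero>)"
    "\<forall>l\<in>carrier R. pencil a b l \<noteq> (\<lambda>i. \<zero>)"
proof -
  have "card {\<lambda>i. \<zero>} < card (shortened (k - 1))"
    using card_shortened[of "k - 1"] q_ge_2 assms by simp
  then obtain b where b: "b \<in> shortened (k - 1)" "b \<noteq> (\<lambda>i. \<zero>)"
    using card_mono[of "{\<lambda>i. \<zero>}" "shortened (k - 1)"] by fastforce
  define multiples where "multiples = (\<lambda>l. vsmult R n l b) ` carrier R"
  have "card multiples \<le> q" unfolding multiples_def by (rule card_image_le[OF finite_carrier])
  also have "\<dots> < q ^ (k - (k - 2))" using q_ge_2 assms by (simp add: power2_eq_square)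
  also have "\<dots> \<le> card (shortened (k - 2))" by (rule card_shortened) simp
  finally obtain a where a: "a \<in> shortened (k - 2)" "a \<notin> multiples"
    using card_mono[of multiples "shortened (k - 2)"] finite_carrier
    unfolding multiples_def by fastforce
  have "pencil a b l \<noteq> (\<lambda>i. \<zero>)" if l: "l \<in> carrier R" for l
  proof
    assume zero: "pencil a b l = (\<lambda>i. \<zero>)"
    have "a = vsmult R n (\<ominus> l) b"
    proof
      fix p
      have "a p \<in> carrier R" "b p \<in> carrier R"
        using a(1) b(1) shortened_subset_code code_in_carrier by blast+
      moreover have "a p = \<zero>" if "\<not> p < n"
        using that a(1) shortened_subset_code code_subset_vecs vecs_beyond_length by force
      ultimately show "a p = vsmult R n (\<ominus> l) b p"
        using fun_cong[OF zero, of p] l unfolding pencil_apply vsmult_def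
        by (auto simp: l_minus minus_equality)
    qed
    then show False using a(2) l unfolding multiples_def by blast
  qed
  then show thesis using that a(1) b by blast
qed

text \<open>The centre agrees with a off W, vanishes at the roots P m and copies y m on the m-th
  block of \<rho> further positions of W.\<close>

lemma common_center:
  assumes a: "a \<in> vecs R n" and y: "\<And>m. m < L \<Longrightarrow> y m \<in> vecs R n"
    and W: "W \<subseteq> {..<n}" and agree: "\<And>m p. m < L \<Longrightarrow> p \<notin> W \<Longrightarrow> y m p = a p"
    and P: "inj_on P {..<L}" "P ` {..<L} \<subseteq> W" and root: "\<And>m. m < L \<Longrightarrow> y m (P m) = \<zero>"
    and \<rho>: "L * \<rho> + L \<le> card W"
  shows "\<exists>v\<in>vecs R n. hamming_dist n (\<lambda>i. \<zero>) v \<le> card {p\<in>{..<n} - W. a p \<noteq> \<zero>} + L * \<rho>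
           \<and> (\<forall>m<L. hamming_dist n (y m) v + \<rho> + 1 \<le> card W)"
proof -
  define Rest where "Rest = W - P ` {..<L}"
  have fin: "finite W" "finite Rest" using W finite_subset unfolding Rest_def by auto
  have card_Rest: "card Rest = card W - L"
    unfolding Rest_def using P fin by (simp add: card_Diff_subset finite_subset card_image)
  with \<rho> have "L * \<rho> \<le> card Rest" by linarith
  then obtain label where label_all: "card {p\<in>Rest. label p < L} = L * \<rho>"
    and label_block: "\<And>m. m < L \<Longrightarrow> card {p\<in>Rest. label p = m} = \<rho>"
    using exists_block_labelling[OF fin(2)] by blast
  define v where "v p = (if p \<notin> W then a p
      else if p \<in> Rest \<and> label p < L then y (label p) p else \<zero>)" for p
  have "v \<in> vecs R n"
  proof -
    have "v p \<in> carrier R" for p using a y vecs_in_carrier unfolding v_def by auto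
    moreover have "v p = \<zero>" if "n \<le> p" for p using that W a vecs_beyond_length unfolding v_def by auto
    ultimately show ?thesis unfolding vecs_def by blast
  qed
  moreover have "hamming_dist n (\<lambda>i. \<zero>) v \<le> card {p\<in>{..<n} - W. a p \<noteq> \<zero>} + L * \<rho>"
  proof -
    have "{p. p < n \<and> \<zero> \<noteq> v p} \<subseteq> {p\<in>{..<n} - W. a p \<noteq> \<zero>} \<union> {p\<in>Rest. label p < L}"
      unfolding v_def by auto
    then have "hamming_dist n (\<lambda>i. \<zero>) v \<le> card ({p\<in>{..<n} - W. a p \<noteq> \<zero>} \<union> {p\<in>Rest. label p < L})"
      unfolding hamming_dist_def using fin by (intro card_mono) simp_all
    also have "\<dots> \<le> card {p\<in>{..<n} - W. a p \<noteq> \<zero>} + L * \<rho>"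
      using card_Un_le[of "{p\<in>{..<n} - W. a p \<noteq> \<zero>}" "{p\<in>Rest. label p < L}"] label_all by simp
    finally show ?thesis .
  qed
  moreover have "hamming_dist n (y m) v + \<rho> + 1 \<le> card W" if m: "m < L" for m
  proof -
    have "{p. p < n \<and> y m p \<noteq> v p} \<subseteq> P ` ({..<L} - {m}) \<union> (Rest - {p\<in>Rest. label p = m})"
    proof
      fix p assume p: "p \<in> {p. p < n \<and> y m p \<noteq> v p}"
      have "p \<in> W" using p agree[OF m] unfolding v_def by (cases "p \<in> W") auto
      moreover have "p \<noteq> P m" using p root[OF m] m P(2) unfolding v_def Rest_def by auto
      moreover have "\<not> (p \<in> Rest \<and> label p = m)" using p m unfolding v_def Rest_def by auto
      ultimately show "p \<in> P ` ({..<L} - {m}) \<union> (Rest - {p\<in>Rest. label p = m})"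
        unfolding Rest_def by blast
    qed
    then have "hamming_dist n (y m) v \<le> card (P ` ({..<L} - {m}) \<union> (Rest - {p\<in>Rest. label p = m}))"
      unfolding hamming_dist_def using fin by (intro card_mono) simp_all
    also have "\<dots> \<le> card (P ` ({..<L} - {m})) + card (Rest - {p\<in>Rest. label p = m})"
      by (rule card_Un_le)
    also have "\<dots> \<le> (L - 1) + (card Rest - \<rho>)"
      using card_image_le[of "{..<L} - {m}" P] m label_block[OF m] fin
      by (intro add_mono) (simp_all add: card_Diff_subset)
    finally have "hamming_dist n (y m) v \<le> (L - 1) + (card Rest - \<rho>)" .
    moreover have "\<rho> \<le> L * \<rho>" using m by (cases L) auto
    ultimately show ?thesis using card_Rest \<rho> m by linarith
  qed
  ultimately show ?thesis by blast
qed

lemma card_zeros_le: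
  assumes T: "T \<subseteq> {..<n}" and outside: "\<And>p. p < n \<Longrightarrow> p \<notin> T \<Longrightarrow> c p = \<zero>"
    and heavy: "t + 1 \<le> weight c"
  shows "card {p\<in>T. c p = \<zero>} \<le> card T - (t + 1)"
proof -
  have "finite T" using T finite_subset by blast
  have "{p. p < n \<and> c p \<noteq> \<zero>} = T - {p\<in>T. c p = \<zero>}" using T outside by auto
  then have "weight c = card T - card {p\<in>T. c p = \<zero>}"
    using \<open>finite T\<close> unfolding hamming_dist_def by (simp add: card_Diff_subset)
  then show ?thesis using heavy by linarith
qed

text \<open>Each position p in the support of b is a root of exactly one member of the pencil,
  the one with parameter root p; every member has at most card T - (t + 1) roots in T, so
  root takes at least L values on the support of b.\<close>

lemma pencil_root_positions:
  assumes a: "a \<in> C" and b: "b \<in> C" and T: "T \<subseteq> {..<n}"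
    and outside: "\<And>p. p < n \<Longrightarrow> p \<notin> T \<Longrightarrow> a p = \<zero> \<and> b p = \<zero>"
    and nonzero: "\<And>l. l \<in> carrier R \<Longrightarrow> pencil a b l \<noteq> (\<lambda>i. \<zero>)"
    and heavy: "\<And>c. c \<in> C \<Longrightarrow> c \<noteq> (\<lambda>i. \<zero>) \<Longrightarrow> t + 1 \<le> weight c"
    and many: "(L - 1) * (card T - (t + 1)) < card {p\<in>T. b p \<noteq> \<zero>}"
  obtains \<mu> P where "\<And>m. m < L \<Longrightarrow> \<mu> m \<in> carrier R" "\<And>m. m < L \<Longrightarrow> P m \<in> T \<and> b (P m) \<noteq> \<zero>"
    "\<And>m m'. m < L \<Longrightarrow> m' < L \<Longrightarrow> pencil a b (\<mu> m) (P m') = \<zero> \<longleftrightarrow> m = m'"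
proof -
  define W where "W = {p\<in>T. b p \<noteq> \<zero>}"
  define root where "root p = \<ominus> (a p \<otimes> inv (b p))" for p
  have finT: "finite T" using T finite_subset by blast
  have root_carrier: "root p \<in> carrier R" if "p \<in> W" for p
  proof -
    have "b p \<in> Units R" using that b code_in_carrier field_Units unfolding W_def by blast
    then show ?thesis using a code_in_carrier unfolding root_def by blast
  qed
  have root_iff: "pencil a b l p = \<zero> \<longleftrightarrow> l = root p" if "l \<in> carrier R" "p \<in> W" for l p
    using that T add_mult_eq_zero_iff[of "a p" "b p" l] a b code_in_carrier
    unfolding W_def root_def pencil_apply by auto
  have fibre: "card {p\<in>W. root p = l} \<le> card T - (t + 1)" if l: "l \<in> carrier R" for l
  proof -
    have "pencil a b l p = \<zero>" if "p < n" "p \<notin> T" for p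
      using outside[OF that] l by (simp add: pencil_apply)
    then have "card {p\<in>T. pencil a b l p = \<zero>} \<le> card T - (t + 1)"
      using card_zeros_le T heavy[OF pencil_in_code[OF a b l] nonzero[OF l]] by blast
    moreover have "{p\<in>W. root p = l} \<subseteq> {p\<in>T. pencil a b l p = \<zero>}"
      using root_iff[OF l] unfolding W_def by auto
    then have "card {p\<in>W. root p = l} \<le> card {p\<in>T. pencil a b l p = \<zero>}"
      using finT by (intro card_mono) simp_all
    ultimately show ?thesis by linarith
  qed
  have pigeonhole: "card W \<le> card (root ` W) * (card T - (t + 1))"
    using fibre root_carrier by (intro card_le_card_image_mult) (auto simp: W_def finT)
  have "L \<le> card (root ` W)"
  proof (rule ccontr)
    assume "\<not> L \<le> card (root ` W)"
    then have "card (root ` W) * (card T - (t + 1)) \<le> (L - 1) * (card T - (t + 1))"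
      by (intro mult_le_mono1) simp
    then show False using pigeonhole many unfolding W_def by linarith
  qed
  then obtain P where P: "\<And>m. m < L \<Longrightarrow> P m \<in> W" and inj: "inj_on (root \<circ> P) {..<L}"
    using exists_distinct_values[of W L root] finT unfolding W_def by force
  show thesis
  proof (rule that[of "root \<circ> P" P])
    show "(root \<circ> P) m \<in> carrier R" if "m < L" for m using root_carrier P that by simp
    show "P m \<in> T \<and> b (P m) \<noteq> \<zero>" if "m < L" for m using P[OF that] unfolding W_def by blast
    show "pencil a b ((root \<circ> P) m) (P m') = \<zero> \<longleftrightarrow> m = m'" if "m < L" "m' < L" for m m'
      using root_iff[OF root_carrier[OF P[OF that(1)]] P[OF that(2)]] inj that
      by (auto simp: inj_on_def)
  qed
qed

lemma crowded_ball_if_separated_roots: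
  assumes a: "a \<in> C" and W: "W \<subseteq> {..<n}"
    and y: "\<And>m. m < L \<Longrightarrow> y m \<in> C \<and> y m \<noteq> (\<lambda>i. \<zero>)"
    and agree: "\<And>m p. m < L \<Longrightarrow> p \<notin> W \<Longrightarrow> y m p = a p"
    and P: "\<And>m. m < L \<Longrightarrow> P m \<in> W"
    and roots: "\<And>m m'. m < L \<Longrightarrow> m' < L \<Longrightarrow> y m (P m') = \<zero> \<longleftrightarrow> m = m'"
    and \<rho>: "L * \<rho> + L \<le> card W" "card W \<le> t + 1 + \<rho>"
    and a_light: "card {p\<in>{..<n} - W. a p \<noteq> \<zero>} + L * \<rho> \<le> t"
  shows "crowded_ball L t"
proof -
  have "inj_on y {..<L}" using roots by (intro inj_onI) (metis lessThan_iff)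
  have "inj_on P {..<L}" using roots by (intro inj_onI) (metis lessThan_iff)
  moreover have "P ` {..<L} \<subseteq> W" using P by auto
  moreover have "y m \<in> vecs R n" if "m < L" for m using y[OF that] code_subset_vecs by blast
  moreover have "a \<in> vecs R n" using a code_subset_vecs by blast
  ultimately obtain v where v: "v \<in> vecs R n"
      and dist_zero: "hamming_dist n (\<lambda>i. \<zero>) v \<le> card {p\<in>{..<n} - W. a p \<noteq> \<zero>} + L * \<rho>"
      and dist_y: "\<And>m. m < L \<Longrightarrow> hamming_dist n (y m) v + \<rho> + 1 \<le> card W"
    using common_center[of a L y W P \<rho>] W agree roots \<rho>(1) by blast
  have "hamming_dist n (\<lambda>i. \<zero>) v \<le> t" using dist_zero a_light by linarith
  moreover have "hamming_dist n (y m) v \<le> t" if "m < L" for m using dist_y[OF that] \<rho>(2) by linarith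
  ultimately show ?thesis using crowded_ball_intro[of L y v t] y \<open>inj_on y {..<L}\<close> v by blast
qed

lemma crowded_ball_if_heavy:
  assumes L: "1 \<le> L" and k: "2 \<le> k" and d: "L^2 \<le> n - k" and t: "L * (n - k) + 1 \<le> (L + 1) * t"
    and heavy: "\<And>c. c \<in> C \<Longrightarrow> c \<noteq> (\<lambda>i. \<zero>) \<Longrightarrow> t + 1 \<le> weight c"
  shows "crowded_ball L t"
proof -
  obtain a b where a: "a \<in> shortened (k - 2)" and b: "b \<in> shortened (k - 1)" "b \<noteq> (\<lambda>i. \<zero>)"
    and nonzero: "\<forall>l\<in>carrier R. pencil a b l \<noteq> (\<lambda>i. \<zero>)"
    using exists_pencil[OF k] by blast
  have aC: "a \<in> C" and bC: "b \<in> C" using a b shortened_subset_code by blast+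
  define T where "T = {k - 2..<n}"
  define W where "W = {p\<in>T. b p \<noteq> \<zero>}"
  have WT: "W \<subseteq> T" and Tn: "T \<subseteq> {..<n}" unfolding W_def T_def by auto
  have outside_T: "a p = \<zero> \<and> b p = \<zero>" if "p < n" "p \<notin> T" for p
    using that a b unfolding T_def shortened_def by auto
  have card_T: "card T = (n - k) + 2" unfolding T_def using k k_le_n by simp
  have "card W \<le> card T" using WT by (intro card_mono) (simp_all add: T_def)
  moreover have "card (T - W) = card T - card W" using WT by (simp add: card_Diff_subset T_def finite_subset)
  ultimately have ZW: "card (T - W) + card W = (n - k) + 2" using card_T by simp
  have "k - 2 \<in> T - W" using k k_le_n b(1) unfolding T_def W_def shortened_def by auto
  then have Z: "1 \<le> card (T - W)" by (auto simp: T_def card_gt_0_iff Suc_le_eq)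
  have "b \<in> shortened (k - 2)" using b(1) unfolding shortened_def by auto
  then have "t + 1 \<le> card W" using heavy[OF bC b(2)] weight_shortened unfolding W_def T_def by simp
  define \<rho> where "\<rho> = card W - (t + 1)"
  have \<rho>: "card W = t + 1 + \<rho>" using \<open>t + 1 \<le> card W\<close> unfolding \<rho>_def by simp
  note arith = pencil_arith[OF ZW Z \<rho> L t d]
  have "(L - 1) * (card T - (t + 1)) < card {p\<in>T. b p \<noteq> \<zero>}"
    using arith(1) card_T unfolding W_def by simp
  then obtain \<mu> P where \<mu>: "\<And>m. m < L \<Longrightarrow> \<mu> m \<in> carrier R"
      and P: "\<And>m. m < L \<Longrightarrow> P m \<in> T \<and> b (P m) \<noteq> \<zero>"
      and roots: "\<And>m m'. m < L \<Longrightarrow> m' < L \<Longrightarrow> pencil a b (\<mu> m) (P m') = \<zero> \<longleftrightarrow> m = m'"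
    using pencil_root_positions[OF aC bC Tn outside_T _ heavy] nonzero by blast
  have b_off_W: "b p = \<zero>" if "p \<notin> W" for p
    using that outside_T bC code_subset_vecs vecs_beyond_length unfolding W_def
    by (cases "p < n") (auto simp: subset_iff)
  have agree: "pencil a b (\<mu> m) p = a p" if "m < L" "p \<notin> W" for m p
    using pencil_eq_left[of a "\<mu> m" b p] aC \<mu>[OF that(1)] b_off_W[OF that(2)] by blast
  have "card {p\<in>{..<n} - W. a p \<noteq> \<zero>} \<le> card (T - W)"
    using outside_T by (intro card_mono) (auto simp: T_def, meson not_le)
  show ?thesis
  proof (rule crowded_ball_if_separated_roots[of a W L "\<lambda>m. pencil a b (\<mu> m)" P \<rho> t])
    show "W \<subseteq> {..<n}" using WT Tn by blast
    show "pencil a b (\<mu> m) \<in> C \<and> pencil a b (\<mu> m) \<noteq> (\<lambda>i. \<zero>)" if "m < L" for m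
      using pencil_in_code[OF aC bC \<mu>[OF that]] nonzero \<mu>[OF that] by blast
    show "P m \<in> W" if "m < L" for m using P[OF that] unfolding W_def by blast
    show "card {p\<in>{..<n} - W. a p \<noteq> \<zero>} + L * \<rho> \<le> t"
      using \<open>card {p\<in>{..<n} - W. a p \<noteq> \<zero>} \<le> card (T - W)\<close> arith(3) by linarith
  qed (use aC agree roots arith(2) \<rho> in auto)
qed

section \<open>The rate bound\<close>

lemma crowded_ball_if_high_rate:
  assumes L: "2 \<le> L" and k: "3 * L + 1 \<le> k" and t: "L * (n - k) + 1 \<le> (L + 1) * t"
    and t_large: "2 * L^2 * (3 * L + 1) + L \<le> t"
  shows "crowded_ball L t"
proof (cases "n - k + L \<le> t")
  case True
  then show ?thesis using crowded_ball_if_small_redundancy k by simp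
next
  case False
  then have d: "2 * L^2 * (3 * L + 1) \<le> n - k" using t_large by linarith
  show ?thesis
  proof (cases "q \<le> L")
    case True
    then show ?thesis
      using crowded_ball_if_small_field[OF True _ k two_mul_cube_le_pow d t] by simp
  next
    case False
    show ?thesis
    proof (cases "\<exists>c\<in>C. c \<noteq> (\<lambda>i. \<zero>) \<and> weight c \<le> t")
      case True
      then show ?thesis using crowded_ball_if_light_codeword False by auto
    next
      case heavy: False
      have "L^2 \<le> 2 * L^2 * (3 * L + 1)" by simp
      then have "L^2 \<le> n - k" using d by (rule le_trans)
      moreover have "t + 1 \<le> weight c" if "c \<in> C" "c \<noteq> (\<lambda>i. \<zero>)" for c
        using heavy that by force
      ultimately show ?thesis using crowded_ball_if_heavy[of L t] L k t by simp
    qed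
  qed
qed

end

lemma linear_code_rate_bound:
  fixes L :: nat and r :: real and F :: "nat ring"
  assumes L: "2 \<le> L" and r: "0 \<le> r" "r < real L / (real L + 1)"
    and F: "field F" "finite (carrier F)"
    and n: "real (2 * L^2 * (3 * L + 1) + L) / r + real (3 * L + 1) / (1 - (real L + 1) / real L * r)
              \<le> real n"
    and m: "r * real n = real m" and code: "linear_code F n k C" and decodable: "list_decodable F n r L C"
  shows "int k \<le> int n - \<lceil>(real L + 1) / real L * r * real n\<rceil>"
proof (rule ccontr)
  assume violation: "\<not> ?thesis"
  interpret code_over_finite_field F n k C
    using F code by (simp add: code_over_finite_field_def code_over_finite_field_axioms_def)
  have "int (n - k) < \<lceil>(real L + 1) / real L * real m\<rceil>"
    using violation k_le_n m by (simp add: of_nat_diff mult.assoc)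
  then have d_lt: "real (n - k) < (real L + 1) / real L * real m" by (simp add: less_ceiling_iff)
  then have "real (L * (n - k)) < real ((L + 1) * m)" using L by (simp add: field_simps)
  then have t: "L * (n - k) + 1 \<le> (L + 1) * m" by linarith
  define \<epsilon> where "\<epsilon> = 1 - (real L + 1) / real L * r"
  have "(real L + 1) / real L * r < (real L + 1) / real L * (real L / (real L + 1))"
    using r L by (intro mult_strict_left_mono) auto
  then have \<epsilon>: "0 < \<epsilon>" using L unfolding \<epsilon>_def by simp
  \<comment> \<open>Needed because x / 0 = 0 makes the hypothesis on n vacuous in its first summand.\<close>
  have "0 < r"
  proof (rule ccontr)
    assume "\<not> 0 < r"
    then have "m = 0" using r m by simp
    then show False using t by simp
  qed
  have "0 \<le> real (3 * L + 1) / \<epsilon>" and "0 \<le> real (2 * L^2 * (3 * L + 1) + L) / r"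
    using \<epsilon> r by simp_all
  then have n_first: "real (2 * L^2 * (3 * L + 1) + L) / r \<le> real n"
    and n_second: "real (3 * L + 1) / \<epsilon> \<le> real n"
    using n unfolding \<epsilon>_def by linarith+
  from n_first have "real (2 * L^2 * (3 * L + 1) + L) \<le> real m"
    using \<open>0 < r\<close> m pos_divide_le_eq[of r] by (metis mult.commute)
  then have "2 * L^2 * (3 * L + 1) + L \<le> m" by (simp only: of_nat_le_iff)
  moreover have "3 * L + 1 \<le> k"
  proof -
    have "real (3 * L + 1) \<le> \<epsilon> * real n"
      using n_second \<epsilon> pos_divide_le_eq[of \<epsilon>] by (metis mult.commute)
    also have "\<dots> = real n - (real L + 1) / real L * real m"
      unfolding \<epsilon>_def m[symmetric] by (simp add: algebra_simps)
    also have "\<dots> < real k" using d_lt k_le_n by (simp add: of_nat_diff)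
    finally show ?thesis by simp
  qed
  ultimately have "crowded_ball L m" using crowded_ball_if_high_rate L t by blast
  then show False using not_list_decodable_if_crowded_ball m decodable by simp
qed

theorem proposition3p6:
  fixes L :: nat and r :: real
  assumes "L \<ge> 2" and "0 \<le> r" and "r < real L / (real L + 1)"
  shows "\<exists>n0::nat. \<forall>(F :: nat ring) n k C.
           field F \<longrightarrow> finite (carrier F) \<longrightarrow> n \<ge> n0 \<longrightarrow>
           (\<exists>m::nat. r * real n = real m) \<longrightarrow>
           linear_code F n k C \<longrightarrow> list_decodable F n r L C \<longrightarrow>
           int k \<le> int n - \<lceil>(real L + 1) / real L * r * real n\<rceil>"
proof -
  define B where "B = real (2 * L^2 * (3 * L + 1) + L) / r
    + real (3 * L + 1) / (1 - (real L + 1) / real L * r)"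
  show ?thesis
  proof (intro exI[of _ "nat \<lceil>B\<rceil>"] allI impI)
    fix F :: "nat ring" and n k C
    assume "field F" "finite (carrier F)" "nat \<lceil>B\<rceil> \<le> n" "\<exists>m::nat. r * real n = real m"
      "linear_code F n k C" "list_decodable F n r L C"
    moreover have "B \<le> real n" using \<open>nat \<lceil>B\<rceil> \<le> n\<close> real_nat_ceiling_ge[of B] by linarith
    ultimately show "int k \<le> int n - \<lceil>(real L + 1) / real L * r * real n\<rceil>"
      using linear_code_rate_bound[OF assms] unfolding B_def by blast
  qed
qed

end
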